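(* Let $s,s'\in\mathbb C$ and $f\in C_c^{\mathrm{lc}}(G/M)$. Then $\mathcal R_{s,s'}f$ is a well-defined, locally constant, compactly supported function on $G/M\langle\tau\rangle$; equivalently, under the bijection $G/M\langle\tau\rangle\cong(\Omega\times\Omega)\setminus\mathrm{diag}(\Omega)$, $\mathcal R_{s,s'}f\in C_c^{\mathrm{lc}}((\Omega\times\Omega)\setminus\mathrm{diag}(\Omega))$.
   Context: Let $q\ge2$, $\mathfrak G$ the $(q+1)$-regular tree with vertex set $\mathfrak X$, graph distance $d$ and boundary $\Omega$ (infinite non-backtracking edge chains modulo eventual equality up to shift, topologized by the sets of classes of chains starting with a given directed edge). Fix a vertex $o$ and $\omega_-\ne\omega_+$ with $o$ on the geodesic $]\omega_-,\omega_+[$; $\langle x,\omega\rangle=d(o,y)-d(x,y)$ where $[o,\omega)\cap[x,\omega)=[y,\omega)$. $G=\mathrm{Aut}(\mathfrak G)$ (topology of pointwise convergence), $K=\mathrm{Stab}_G(o)$, $B_{\omega_+}=\{g:g\omega_+=\omega_+,\ g\text{ fixes a vertex}\}$, $\tau\in G$ fixes $\omega_\pm$ and translates $]\omega_-,\omega_+[$ one step towards $\omega_+$; $g=kn\tau^j$ ($k\in K,n\in B_{\omega_+}$) with unique $j=:H(g)$. $r\in K$ with $r^2=\mathrm{id}$, $r\tau^jr^{-1}=\tau^{-j}$. $M=\{\gamma\in K:\gamma$ fixes $]\omega_-,\omega_+[$ pointwise$\}$. $G/M$ is homeomorphic to $\mathfrak P=\{(\omega_1,\omega_2,x):\omega_1\neq\omega_2,\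 x\in]\omega_1,\omega_2[\}\subseteq\Omega\times\Omega\times\mathfrak X$ via $gM\mapsto(g\omega_-,g\omega_+,go)$; $C_c^{\mathrm{lc}}(G/M)$ denotes locally constant compactly supported functions. $G/M\langle\tau\rangle$ carries the quotient topology, and $gM\langle\tau\rangle\mapsto(g\omega_-,g\omega_+)$ is a bijection onto $(\Omega\times\Omega)\setminus\mathrm{diag}(\Omega)$. With $d_{s,s'}(gM)=q^{(\frac12+is)H(g)}q^{(\frac12+is')H(gr)}$, the weighted Radon transform is $(\mathcal R_{s,s'}f)(g)=\sum_{j\in\mathbb Z}f(g\tau^jM)\,d_{s,-\overline{s'}}(g\tau^jM)$. *)

theory Defs
  imports "HOL-Analysis.Analysis"
begin

text \<open>The tree is given by a vertex type 'v (the whole type is the vertex set)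
and an adjacency relation E.\<close>

definition is_cycle :: "('v \<Rightarrow> 'v \<Rightarrow> bool) \<Rightarrow> (nat \<Rightarrow> 'v) \<Rightarrow> nat \<Rightarrow> bool" where
  "is_cycle E p n \<longleftrightarrow> n \<ge> 3 \<and> p 0 = p n \<and> (\<forall>i<n. E (p i) (p (Suc i))) \<and> inj_on p {0..<n}"

definition regular_tree :: "nat \<Rightarrow> ('v \<Rightarrow> 'v \<Rightarrow> bool) \<Rightarrow> bool" where
  "regular_tree q E \<longleftrightarrow>
     (\<forall>x y. E x y \<longrightarrow> E y x) \<and> (\<forall>x. \<not> E x x) \<and>
     (\<forall>x y. E\<^sup>*\<^sup>* x y) \<and>
     (\<forall>p n. \<not> is_cycle E p n) \<and>
     (\<forall>x. finite {y. E x y} \<and> card {y. E x y} = q + 1)"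

text \<open>Infinite non-backtracking edge chains, represented by their vertex sequences.\<close>
definition nb_chain :: "('v \<Rightarrow> 'v \<Rightarrow> bool) \<Rightarrow> (nat \<Rightarrow> 'v) \<Rightarrow> bool" where
  "nb_chain E r \<longleftrightarrow> (\<forall>n. E (r n) (r (Suc n))) \<and> (\<forall>n. r n \<noteq> r (Suc (Suc n)))"

definition chain_equiv :: "(nat \<Rightarrow> 'v) \<Rightarrow> (nat \<Rightarrow> 'v) \<Rightarrow> bool" where
  "chain_equiv r r' \<longleftrightarrow> (\<exists>k l. \<forall>n. r (n + k) = r' (n + l))"

definition ends :: "('v \<Rightarrow> 'v \<Rightarrow> bool) \<Rightarrow> (nat \<Rightarrow> 'v) set set" where
  "ends E = {{r'. nb_chain E r' \<and> chain_equiv r r'} | r. nb_chain E r}"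

definition end_act :: "('v \<Rightarrow> 'v) \<Rightarrow> (nat \<Rightarrow> 'v) set \<Rightarrow> (nat \<Rightarrow> 'v) set" where
  "end_act g \<omega> = (\<lambda>r. g \<circ> r) ` \<omega>"

text \<open>Vertex x lies on the geodesic ]w1,w2[ iff the chains from x to w1 and to w2
leave x through different edges.\<close>
definition on_geod :: "(nat \<Rightarrow> 'v) set \<Rightarrow> (nat \<Rightarrow> 'v) set \<Rightarrow> 'v \<Rightarrow> bool" where
  "on_geod w1 w2 x \<longleftrightarrow> (\<exists>r1\<in>w1. \<exists>r2\<in>w2. r1 0 = x \<and> r2 0 = x \<and> r1 1 \<noteq> r2 1)"

definition Aut :: "('v \<Rightarrow> 'v \<Rightarrow> bool) \<Rightarrow> ('v \<Rightarrow> 'v) set" where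
  "Aut E = {g. bij g \<and> (\<forall>x y. E x y \<longleftrightarrow> E (g x) (g y))}"

definition Gtop :: "('v \<Rightarrow> 'v \<Rightarrow> bool) \<Rightarrow> ('v \<Rightarrow> 'v) topology" where
  "Gtop E = subtopology (product_topology (\<lambda>_. discrete_topology UNIV) UNIV) (Aut E)"

definition Kgrp :: "('v \<Rightarrow> 'v \<Rightarrow> bool) \<Rightarrow> 'v \<Rightarrow> ('v \<Rightarrow> 'v) set" where
  "Kgrp E v0 = {g \<in> Aut E. g v0 = v0}"

definition Bgrp :: "('v \<Rightarrow> 'v \<Rightarrow> bool) \<Rightarrow> (nat \<Rightarrow> 'v) set \<Rightarrow> ('v \<Rightarrow> 'v) set" where
  "Bgrp E wp = {g \<in> Aut E. end_act g wp = wp \<and> (\<exists>x. g x = x)}"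

definition Mgrp :: "('v \<Rightarrow> 'v \<Rightarrow> bool) \<Rightarrow> 'v \<Rightarrow> (nat \<Rightarrow> 'v) set \<Rightarrow> (nat \<Rightarrow> 'v) set
                     \<Rightarrow> ('v \<Rightarrow> 'v) set" where
  "Mgrp E v0 wm wp = {g \<in> Kgrp E v0. \<forall>x. on_geod wm wp x \<longrightarrow> g x = x}"

definition ipow :: "('v \<Rightarrow> 'v) \<Rightarrow> int \<Rightarrow> ('v \<Rightarrow> 'v)" where
  "ipow t j = (if j \<ge> 0 then t ^^ nat j else (inv t) ^^ nat (- j))"

definition Hc :: "('v \<Rightarrow> 'v \<Rightarrow> bool) \<Rightarrow> 'v \<Rightarrow> (nat \<Rightarrow> 'v) set \<Rightarrow> ('v \<Rightarrow> 'v)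
                   \<Rightarrow> ('v \<Rightarrow> 'v) \<Rightarrow> int" where
  "Hc E v0 wp t g = (THE j. \<exists>k\<in>Kgrp E v0. \<exists>n\<in>Bgrp E wp. g = k \<circ> n \<circ> ipow t j)"

definition lcoset :: "('v \<Rightarrow> 'v) \<Rightarrow> ('v \<Rightarrow> 'v) set \<Rightarrow> ('v \<Rightarrow> 'v) set" where
  "lcoset g S = (\<lambda>h. g \<circ> h) ` S"

definition Mtau :: "('v \<Rightarrow> 'v) set \<Rightarrow> ('v \<Rightarrow> 'v) \<Rightarrow> ('v \<Rightarrow> 'v) set" where
  "Mtau M t = {m \<circ> ipow t j | m j. m \<in> M}"

definition qtop :: "'a topology \<Rightarrow> ('a \<Rightarrow> 'b) \<Rightarrow> 'b topology" where
  "qtop X p = topology (\<lambda>U. U \<subseteq> p ` topspace X \<and> openin X {x \<in> topspace X. p x \<in> U})"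

definition Cc_lc :: "'a topology \<Rightarrow> ('a \<Rightarrow> complex) set" where
  "Cc_lc X = {F. (\<forall>x\<in>topspace X. \<exists>U. openin X U \<and> x \<in> U \<and> (\<forall>y\<in>U. F y = F x)) \<and>
                 compactin X (X closure_of {x \<in> topspace X. F x \<noteq> 0})}"

definition dsw :: "nat \<Rightarrow> ('v \<Rightarrow> 'v \<Rightarrow> bool) \<Rightarrow> 'v \<Rightarrow> (nat \<Rightarrow> 'v) set \<Rightarrow> ('v \<Rightarrow> 'v)
                    \<Rightarrow> ('v \<Rightarrow> 'v) \<Rightarrow> complex \<Rightarrow> complex \<Rightarrow> ('v \<Rightarrow> 'v) \<Rightarrow> complex" where
  "dsw q E v0 wp t rr s s' g =
     (of_nat q) powr ((1/2 + \<i> * s) * of_int (Hc E v0 wp t g)) *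
     (of_nat q) powr ((1/2 + \<i> * s') * of_int (Hc E v0 wp t (g \<circ> rr)))"

text \<open>f is a function on G/M, i.e. on the cosets gM.\<close>
definition radon :: "nat \<Rightarrow> ('v \<Rightarrow> 'v \<Rightarrow> bool) \<Rightarrow> 'v \<Rightarrow> (nat \<Rightarrow> 'v) set \<Rightarrow> (nat \<Rightarrow> 'v) set
                     \<Rightarrow> ('v \<Rightarrow> 'v) \<Rightarrow> ('v \<Rightarrow> 'v) \<Rightarrow> complex \<Rightarrow> complex
                     \<Rightarrow> (('v \<Rightarrow> 'v) set \<Rightarrow> complex) \<Rightarrow> ('v \<Rightarrow> 'v) \<Rightarrow> complex" where
  "radon q E v0 wm wp t rr s s' f g =
     (\<Sum>\<^sub>\<infinity>j\<in>(UNIV::int set). f (lcoset (g \<circ> ipow t j) (Mgrp E v0 wm wp)) *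
                   dsw q E v0 wp t rr s (- cnj s') (g \<circ> ipow t j))"

end

theory Submission
  imports Defs
begin

text \<open>Write o for v0. The support of f is compact in G/M and gM \<mapsto> g o is continuous into
  the discrete vertex set, so the vertices g o with gM in the support form a finite set S.
  The j-th term of the Radon sum at g vanishes unless g \<tau>^j o \<in> S; since \<tau> translates the
  geodesic, j \<mapsto> \<tau>^j o is injective, so only the finitely many j with \<tau>^j o \<in> g0^-1 S
  contribute, for every g agreeing with g0 on g0^-1 S. On the open set of such g which moreover
  map g0^-1 o to o and satisfy f(g \<tau>^j M) = f(g0 \<tau>^j M) for these j, every term is constant,
  because H is left K-invariant. H is also right M-invariant (M fixes the geodesic and is
  normalised by \<tau> and r), so the sum is invariant under g \<mapsto> g m \<tau>^k and descends to G/M<\<tau>>.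
  There it is locally constant, hence its support is clopen, and it lies in the compact image of
  the support of f.\<close>

section \<open>Non-backtracking chains and ends\<close>

lemma chain_equiv_refl: "chain_equiv r r"
  unfolding chain_equiv_def by blast

lemma chain_equiv_sym: "chain_equiv r r' \<Longrightarrow> chain_equiv r' r"
  unfolding chain_equiv_def by metis

lemma chain_equiv_trans:
  assumes "chain_equiv a b" "chain_equiv b c" shows "chain_equiv a c"
proof -
  obtain k l where h1: "\<forall>n. a (n+k) = b (n+l)" using assms(1) unfolding chain_equiv_def by blast
  obtain k' l' where h2: "\<forall>n. b (n+k') = c (n+l')" using assms(2) unfolding chain_equiv_def by blast
  have "\<forall>n. a (n+(k+k')) = c (n+(l+l'))"
  proof
    fix n
    have "a (n+(k+k')) = a ((n+k')+k)" by (simp add: ac_simps)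
    also have "\<dots> = b ((n+k')+l)" using h1 by blast
    also have "\<dots> = b ((n+l)+k')" by (simp add: ac_simps)
    also have "\<dots> = c ((n+l)+l')" using h2 by blast
    also have "\<dots> = c (n+(l+l'))" by (simp add: ac_simps)
    finally show "a (n+(k+k')) = c (n+(l+l'))" .
  qed
  then show ?thesis unfolding chain_equiv_def by blast
qed

lemma chain_equiv_shift: "chain_equiv r (\<lambda>i. r (i+n))"
  unfolding chain_equiv_def by (rule exI[of _ n], rule exI[of _ 0]) simp

lemma chain_equiv_comp: "chain_equiv r r' \<Longrightarrow> chain_equiv (g \<circ> r) (g \<circ> r')"
  unfolding chain_equiv_def comp_def by metis

lemma nb_chain_shift: "nb_chain E r \<Longrightarrow> nb_chain E (\<lambda>i. r (i+n))"
  unfolding nb_chain_def by simp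

lemma ends_class: "\<omega> \<in> ends E \<Longrightarrow> r \<in> \<omega> \<Longrightarrow> \<omega> = {r'. nb_chain E r' \<and> chain_equiv r r'}"
  unfolding ends_def using chain_equiv_trans chain_equiv_sym by blast

lemma ends_nb_chain: "\<omega> \<in> ends E \<Longrightarrow> r \<in> \<omega> \<Longrightarrow> nb_chain E r"
  unfolding ends_def by blast

lemma ends_nonempty: "\<omega> \<in> ends E \<Longrightarrow> \<exists>r. r \<in> \<omega>"
  unfolding ends_def using chain_equiv_refl by blast

lemma ends_memI: "\<omega> \<in> ends E \<Longrightarrow> r \<in> \<omega> \<Longrightarrow> nb_chain E r' \<Longrightarrow> chain_equiv r r' \<Longrightarrow> r' \<in> \<omega>"
  using ends_class by blast

lemma ends_chain_equiv: "\<omega> \<in> ends E \<Longrightarrow> r \<in> \<omega> \<Longrightarrow> r' \<in> \<omega> \<Longrightarrow> chain_equiv r r'"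
  using ends_class by blast

lemma ends_shift: "\<omega> \<in> ends E \<Longrightarrow> r \<in> \<omega> \<Longrightarrow> (\<lambda>i. r (i + n)) \<in> \<omega>"
  using ends_memI ends_nb_chain nb_chain_shift chain_equiv_shift by metis

lemma walk_exists:
  "E\<^sup>*\<^sup>* x z \<Longrightarrow> \<exists>p n. p 0 = x \<and> p n = z \<and> (\<forall>i<n. E (p i) (p (Suc i)))"
proof (induction rule: rtranclp_induct)
  case base
  show ?case by (rule exI[of _ "\<lambda>_. x"], rule exI[of _ 0]) simp
next
  case (step y z)
  then obtain p n where p: "p 0 = x" "p n = y" "\<forall>i<n. E (p i) (p (Suc i))" by blast
  define p' where "p' = p(Suc n := z)"
  have "p' 0 = x" "p' (Suc n) = z" using p unfolding p'_def by auto
  moreover have "\<forall>i<Suc n. E (p' i) (p' (Suc i))"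
  proof (intro allI impI)
    fix i assume "i < Suc n"
    then consider "i < n" | "i = n" by linarith
    then show "E (p' i) (p' (Suc i))"
      by cases (use p step.hyps(2) in \<open>auto simp: p'_def\<close>)
  qed
  ultimately show ?case by blast
qed

lemma walk_drop_backtrack:
  assumes walk: "\<forall>i<m. E (p i) (p (Suc i))" and k: "k + 2 \<le> m" and return: "p k = p (k + 2)"
  shows "\<exists>p'. p' 0 = p 0 \<and> p' (m - 2) = p m \<and> (\<forall>i<m - 2. E (p' i) (p' (Suc i)))"
proof -
  define p' where "p' i = (if i \<le> k then p i else p (i + 2))" for i
  have "p' 0 = p 0" by (simp add: p'_def)
  moreover have "p' (m - 2) = p m"
  proof (cases "m - 2 \<le> k")
    case True
    then have "m = k + 2" using k by linarith
    then show ?thesis using return by (simp add: p'_def)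
  next
    case False
    then have "m - 2 + 2 = m" using k by linarith
    then show ?thesis using False by (simp add: p'_def)
  qed
  moreover have "\<forall>i<m - 2. E (p' i) (p' (Suc i))"
  proof (intro allI impI)
    fix i assume i: "i < m - 2"
    consider "i < k" | "i = k" | "k < i" by linarith
    then show "E (p' i) (p' (Suc i))"
    proof cases
      case 1 then show ?thesis using walk i by (simp add: p'_def)
    next
      case 2
      have "E (p (k + 2)) (p (Suc (k + 2)))" using walk i 2 by simp
      then show ?thesis using 2 return by (simp add: p'_def)
    next
      case 3
      have "E (p (i + 2)) (p (Suc (i + 2)))" using walk i by simp
      then show ?thesis using 3 by (simp add: p'_def)
    qed
  qed
  ultimately show ?thesis by blast
qed

locale tree =
  fixes E :: "'v \<Rightarrow> 'v \<Rightarrow> bool"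
  assumes sym: "E x y \<Longrightarrow> E y x"
    and irrefl: "\<not> E x x"
    and connected: "E\<^sup>*\<^sup>* x y"
    and acyclic: "\<not> is_cycle E p n"

lemma regular_tree_imp_tree: "regular_tree q E \<Longrightarrow> tree E"
  unfolding regular_tree_def tree_def by blast

context tree
begin

lemma nb_walk_not_closed:
  assumes "\<forall>i<n. E (p i) (p (Suc i))" and "\<forall>i. i + 2 \<le> n \<longrightarrow> p i \<noteq> p (i + 2)" and "0 < n"
  shows "p 0 \<noteq> p n"
  using assms
proof (induction n arbitrary: p rule: less_induct)
  case (less n)
  show ?case
  proof
    assume eq: "p 0 = p n"
    show False
    proof (cases "\<exists>i j. i < j \<and> j \<le> n \<and> j - i < n \<and> p i = p j")
      case True
      \<comment> \<open>a shorter closed subwalk\<close>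
      then obtain i j where ij: "i<j" "j \<le> n" "j - i < n" "p i = p j" by blast
      have "(\<lambda>k. p (k+i)) 0 \<noteq> (\<lambda>k. p (k+i)) (j-i)"
      proof (rule less.IH[of "j-i"])
        show "\<forall>k<j - i. E (p (k + i)) (p (Suc k + i))" using ij less.prems(1) by auto
        show "\<forall>k. k + 2 \<le> j - i \<longrightarrow> p (k + i) \<noteq> p (k + 2 + i)"
        proof (intro allI impI)
          fix k assume "k + 2 \<le> j - i"
          then have "(k+i)+2 \<le> n" using ij by linarith
          then have "p (k+i) \<noteq> p ((k+i)+2)" using less.prems(2) by blast
          then show "p (k + i) \<noteq> p (k + 2 + i)" by (simp add: ac_simps)
        qed
      qed (use ij in auto)
      then show False using ij by simp
    next
      case False
      \<comment> \<open>p is injective on {0..<n}: a loop, a backtrack or a cycle\<close>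
      have inj: "inj_on p {0..<n}"
      proof (rule inj_onI)
        fix x y assume xy: "x \<in> {0..<n}" "y \<in> {0..<n}" "p x = p y"
        show "x = y"
        proof (rule ccontr)
          assume "x \<noteq> y"
          then consider "x < y" | "y < x" by linarith
          then show False using False xy by (cases; fastforce)
        qed
      qed
      consider "n = 1" | "n = 2" | "n \<ge> 3" using less.prems(3) by linarith
      then show False
      proof cases
        case 1 then show False using less.prems(1) eq irrefl by (metis One_nat_def lessI)
      next
        case 2
        have "p 0 \<noteq> p (0+2)" using less.prems(2)[rule_format, of 0] 2 by simp
        then show False using eq 2 by (simp add: numeral_2_eq_2)
      next
        case 3
        have "is_cycle E p n" unfolding is_cycle_def using 3 eq inj less.prems(1) by auto
        then show False using acyclic by blast
      qed
    qed
  qed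
qed

lemma nb_chain_start_ne:
  assumes "nb_chain E r" "0 < n" shows "r n \<noteq> r 0"
proof -
  have "r 0 \<noteq> r n"
    by (rule nb_walk_not_closed) (use assms in \<open>simp_all add: nb_chain_def numeral_2_eq_2\<close>)
  then show ?thesis by simp
qed

lemma nb_chains_meet_start_ne:
  assumes nb: "nb_chain E r" "nb_chain E r'" and meet: "r k = r' l" and kl: "0 < k + l"
    and branch: "0 < k \<Longrightarrow> 0 < l \<Longrightarrow> r (k - 1) \<noteq> r' (l - 1)"
  shows "r 0 \<noteq> r' 0"
proof -
  have Er: "\<And>i. E (r i) (r (Suc i))" "\<And>i. r i \<noteq> r (Suc (Suc i))"
    and Er': "\<And>i. E (r' i) (r' (Suc i))" "\<And>i. r' i \<noteq> r' (Suc (Suc i))"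
    using nb unfolding nb_chain_def by auto
  \<comment> \<open>run along r up to the meeting point, then back along r'\<close>
  define W where "W i = (if i \<le> k then r i else r' (k + l - i))" for i
  have Wge: "W i = r' (k + l - i)" if "k \<le> i" "i \<le> k + l" for i
    using that meet unfolding W_def by (cases "i = k") auto
  have "W 0 \<noteq> W (k + l)"
  proof (rule nb_walk_not_closed)
    show "\<forall>i<k + l. E (W i) (W (Suc i))"
    proof (intro allI impI)
      fix i assume i: "i < k + l"
      show "E (W i) (W (Suc i))"
      proof (cases "i < k")
        case True then show ?thesis unfolding W_def using Er by auto
      next
        case False
        obtain j where j: "k + l - i = Suc j" using i by (metis Suc_diff_Suc)
        have "k + l - Suc i = j" using j by simp
        then have "W i = r' (Suc j)" "W (Suc i) = r' j"
          using Wge[of i] Wge[of "Suc i"] False i j by auto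
        then show ?thesis using Er'(1)[of j] sym by metis
      qed
    qed
    show "\<forall>i. i + 2 \<le> k + l \<longrightarrow> W i \<noteq> W (i + 2)"
    proof (intro allI impI)
      fix i assume i: "i + 2 \<le> k + l"
      consider "i + 2 \<le> k" | "i + 1 = k" | "k \<le> i" by linarith
      then show "W i \<noteq> W (i + 2)"
      proof cases
        case 1 then show ?thesis unfolding W_def using Er(2)[of i] by auto
      next
        case 2
        have "W i = r (k - 1)" unfolding W_def using 2 by auto
        moreover have "W (i + 2) = r' (l - 1)" using Wge[of "i + 2"] 2 i by auto
        ultimately show ?thesis using branch 2 i by simp
      next
        case 3
        obtain j where j: "k + l - i = j + 2" using i 3 by (metis add.commute le_add_diff_inverse2 le_diff_conv2 add_le_imp_le_diff)
        have jj: "k + l - (i + 2) = j" using j by linarith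
        have "W i = r' (j + 2)" "W (i + 2) = r' j" using Wge[of i] Wge[of "i + 2"] 3 i j jj by auto
        then show ?thesis using Er'(2)[of j] by (simp add: numeral_2_eq_2)
      qed
    qed
  qed (use kl in simp)
  moreover have "W 0 = r 0" unfolding W_def by simp
  moreover have "W (k + l) = r' 0" using Wge[of "k + l"] by simp
  ultimately show ?thesis by simp
qed

lemma nb_chain_eqI:
  assumes nb: "nb_chain E r" "nb_chain E r'" and start: "r 0 = r' 0" and eqv: "chain_equiv r r'"
  shows "r = r'"
proof -
  have "r = r'" if "\<forall>n. r (n + k) = r' (n + l)" for k l
    using that
  proof (induction "k + l" arbitrary: k l rule: less_induct)
    case less
    show ?case
    proof (cases "0 < k \<and> 0 < l \<and> r (k - 1) = r' (l - 1)")
      case True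
      have "\<forall>n. r (n + (k - 1)) = r' (n + (l - 1))"
      proof
        fix n show "r (n + (k - 1)) = r' (n + (l - 1))"
          using True less.prems[rule_format, of "n - 1"] by (cases n) auto
      qed
      moreover have "(k - 1) + (l - 1) < k + l" using True by simp
      ultimately show ?thesis using less.hyps by blast
    next
      case False
      have meet: "r k = r' l" using less.prems[rule_format, of 0] by simp
      show ?thesis
      proof (cases "k + l = 0")
        case True then show ?thesis using less.prems by auto
      next
        case nz: False
        have "r 0 \<noteq> r' 0" by (rule nb_chains_meet_start_ne[OF nb meet]) (use False nz in auto)
        then show ?thesis using start by simp
      qed
    qed
  qed
  then show ?thesis using eqv unfolding chain_equiv_def by blast
qed

lemma ends_eqI: "\<omega> \<in> ends E \<Longrightarrow> r \<in> \<omega> \<Longrightarrow> r' \<in> \<omega> \<Longrightarrow> r 0 = r' 0 \<Longrightarrow> r = r'"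
  using nb_chain_eqI ends_nb_chain ends_chain_equiv by metis

lemma shortest_walk_into:
  assumes "x \<in> A"
  obtains p m where "p 0 = y" "p m \<in> A" "\<forall>k<m. E (p k) (p (Suc k))"
    "\<forall>k. k + 2 \<le> m \<longrightarrow> p k \<noteq> p (k + 2)" "\<forall>k<m. p k \<notin> A"
proof -
  define P where "P n \<longleftrightarrow> (\<exists>p. p 0 = y \<and> p n \<in> A \<and> (\<forall>k<n. E (p k) (p (Suc k))))" for n
  obtain p0 n0 where "p0 0 = y" "p0 n0 = x" "\<forall>i<n0. E (p0 i) (p0 (Suc i))"
    using walk_exists[OF connected] by blast
  then have "P n0" unfolding P_def using assms by blast
  define m where "m = (LEAST n. P n)"
  have Pm: "P m" using LeastI[of P n0] \<open>P n0\<close> m_def by simp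
  have minm: "\<And>n. P n \<Longrightarrow> m \<le> n" using Least_le m_def by metis
  obtain p where p: "p 0 = y" "p m \<in> A" "\<forall>k<m. E (p k) (p (Suc k))" using Pm P_def by blast
  have nbp: "p k \<noteq> p (k + 2)" if k: "k + 2 \<le> m" for k
  proof
    assume "p k = p (k + 2)"
    then obtain p' where p': "p' 0 = p 0" "p' (m - 2) = p m" "\<forall>i<m - 2. E (p' i) (p' (Suc i))"
      using walk_drop_backtrack[of m E p k] p(3) k by blast
    have "P (m - 2)" unfolding P_def using p' p(1,2) by (intro exI[of _ p']) simp
    then have "m \<le> m - 2" by (rule minm)
    then show False using k by linarith
  qed
  have "p k \<notin> A" if "k < m" for k
  proof
    assume "p k \<in> A"
    then have "P k" unfolding P_def using p that by auto
    then show False using minm that by fastforce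
  qed
  then show ?thesis using that p nbp by (simp add: ac_simps)
qed

lemma nb_chain_from:
  assumes c: "nb_chain E c"
  shows "\<exists>r. nb_chain E r \<and> r 0 = y \<and> chain_equiv c r"
proof -
  have cnb: "E (c i) (c (Suc i))" "c i \<noteq> c (Suc (Suc i))" for i
    using c unfolding nb_chain_def by auto
  obtain p m where p: "p 0 = y" "p m \<in> range c" "\<forall>k<m. E (p k) (p (Suc k))"
    and nbp: "\<And>k. k + 2 \<le> m \<Longrightarrow> p k \<noteq> p (k + 2)" and notin: "\<And>k. k < m \<Longrightarrow> p k \<notin> range c"
    using shortest_walk_into[of "c 0" "range c" y] by blast
  obtain i where pi: "p m = c i" using p(2) by blast
  define r where "r x = (if x \<le> m then p x else c (i + (x - m)))" for x
  have rge: "r x = c (i + (x - m))" if "m \<le> x" for x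
    using that pi by (cases "x = m") (auto simp: r_def)
  have "nb_chain E r" unfolding nb_chain_def
  proof (intro conjI allI)
    fix x
    show "E (r x) (r (Suc x))"
    proof (cases "x < m")
      case True then show ?thesis using p(3) by (auto simp: r_def)
    next
      case False
      then have "r x = c (i + (x-m))" "r (Suc x) = c (Suc (i + (x-m)))"
        using rge[of x] rge[of "Suc x"] by (auto simp: Suc_diff_le)
      then show ?thesis using cnb(1) by simp
    qed
    show "r x \<noteq> r (Suc (Suc x))"
    proof -
      consider "x + 2 \<le> m" | "x + 1 = m" | "m \<le> x" by linarith
      then show ?thesis
      proof cases
        case 1 then show ?thesis using nbp[of x] by (simp add: r_def)
      next
        case 2
        have "x = m - 1" using 2 by linarith
        then have "r x = p (m-1)" using 2 by (simp add: r_def)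
        moreover have "i + (Suc (Suc x) - m) = i + 1" using 2 by linarith
        then have "r (Suc (Suc x)) = c (i+1)" using rge[of "Suc (Suc x)"] 2 by simp
        ultimately show ?thesis using notin[of "m - 1"] 2 by auto
      next
        case 3
        have "r x = c (i + (x-m))" "r (Suc (Suc x)) = c (Suc (Suc (i + (x-m))))"
          using rge[of x] rge[of "Suc (Suc x)"] 3 by (auto simp: Suc_diff_le)
        then show ?thesis using cnb(2) by simp
      qed
    qed
  qed
  moreover have "chain_equiv c r" unfolding chain_equiv_def
    by (rule exI[of _ i], rule exI[of _ m]) (simp add: rge ac_simps)
  moreover have "r 0 = y" using p by (simp add: r_def)
  ultimately show ?thesis by blast
qed

lemma ends_ray_from:
  assumes "\<omega> \<in> ends E" shows "\<exists>r\<in>\<omega>. r 0 = y"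
proof -
  obtain c where c: "c \<in> \<omega>" using ends_nonempty[OF assms] by blast
  then obtain r where "nb_chain E r" "r 0 = y" "chain_equiv c r"
    using nb_chain_from ends_nb_chain[OF assms] by blast
  then show ?thesis using ends_memI[OF assms c] by blast
qed

end

section \<open>Automorphisms and their action on ends\<close>

lemma Aut_bij: "g \<in> Aut E \<Longrightarrow> bij g"
  unfolding Aut_def by blast

lemma Aut_adj_iff: "g \<in> Aut E \<Longrightarrow> E (g x) (g y) \<longleftrightarrow> E x y"
  unfolding Aut_def by blast

lemma Aut_id: "id \<in> Aut E"
  unfolding Aut_def by simp

lemma Aut_comp: "f \<in> Aut E \<Longrightarrow> g \<in> Aut E \<Longrightarrow> f \<circ> g \<in> Aut E"
  unfolding Aut_def using bij_comp by fastforce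

lemma Aut_inv_f_f: "g \<in> Aut E \<Longrightarrow> inv g (g x) = x"
  using Aut_bij bij_is_inj inv_f_f by metis

lemma Aut_f_inv_f: "g \<in> Aut E \<Longrightarrow> g (inv g x) = x"
  using Aut_bij bij_inv_eq_iff by metis

lemma Aut_inv_comp: "g \<in> Aut E \<Longrightarrow> inv g \<circ> g = id"
  using Aut_inv_f_f by fastforce

lemma Aut_comp_inv: "g \<in> Aut E \<Longrightarrow> g \<circ> inv g = id"
  using Aut_f_inv_f by fastforce

lemma Aut_inv:
  assumes g: "g \<in> Aut E" shows "inv g \<in> Aut E"
proof -
  have "bij (inv g)" using Aut_bij[OF g] bij_imp_bij_inv by blast
  moreover have "E (inv g x) (inv g y) \<longleftrightarrow> E x y" for x y
    using Aut_adj_iff[OF g, of "inv g x" "inv g y"] Aut_f_inv_f[OF g] by simp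
  ultimately show ?thesis unfolding Aut_def by simp
qed

lemma nb_chain_Aut_comp: "g \<in> Aut E \<Longrightarrow> nb_chain E r \<Longrightarrow> nb_chain E (g \<circ> r)"
  unfolding nb_chain_def using Aut_adj_iff Aut_bij bij_is_inj by (metis comp_apply injD)

lemma end_act_comp: "end_act f (end_act g \<omega>) = end_act (f \<circ> g) \<omega>"
  unfolding end_act_def by (simp add: image_image comp_assoc)

lemma end_act_id: "end_act id \<omega> = \<omega>"
  unfolding end_act_def by simp

lemma end_act_class:
  assumes g: "g \<in> Aut E" and w: "\<omega> \<in> ends E" and r: "r \<in> \<omega>"
  shows "end_act g \<omega> = {r'. nb_chain E r' \<and> chain_equiv (g \<circ> r) r'}"
proof
  show "end_act g \<omega> \<subseteq> {r'. nb_chain E r' \<and> chain_equiv (g \<circ> r) r'}"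
    unfolding end_act_def using g w r ends_nb_chain nb_chain_Aut_comp ends_chain_equiv chain_equiv_comp
    by blast
  show "{r'. nb_chain E r' \<and> chain_equiv (g \<circ> r) r'} \<subseteq> end_act g \<omega>"
  proof
    fix r' assume h: "r' \<in> {r'. nb_chain E r' \<and> chain_equiv (g \<circ> r) r'}"
    have "nb_chain E (inv g \<circ> r')" using h nb_chain_Aut_comp Aut_inv g by blast
    moreover have "chain_equiv r (inv g \<circ> r')"
    proof -
      have "inv g \<circ> (g \<circ> r) = r" using Aut_inv_comp[OF g] by (metis comp_assoc id_comp)
      then show ?thesis using chain_equiv_comp[of "g \<circ> r" r' "inv g"] h by simp
    qed
    ultimately have "inv g \<circ> r' \<in> \<omega>" using ends_memI w r by blast
    moreover have "r' = g \<circ> (inv g \<circ> r')" using Aut_comp_inv[OF g] by (simp add: comp_assoc[symmetric])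
    ultimately show "r' \<in> end_act g \<omega>" unfolding end_act_def by blast
  qed
qed

lemma end_act_eqI:
  assumes "g \<in> Aut E" "\<omega> \<in> ends E" "\<omega>' \<in> ends E" "r \<in> \<omega>" "g \<circ> r \<in> \<omega>'"
  shows "end_act g \<omega> = \<omega>'"
  using end_act_class[OF assms(1,2,4)] ends_class[OF assms(3,5)] by simp

lemma end_act_inv: "g \<in> Aut E \<Longrightarrow> end_act g \<omega> = \<omega> \<Longrightarrow> end_act (inv g) \<omega> = \<omega>"
  by (metis Aut_inv_comp end_act_comp end_act_id)

lemma end_act_funpow: "end_act f \<omega> = \<omega> \<Longrightarrow> end_act (f ^^ n) \<omega> = \<omega>"
proof (induction n)
  case (Suc n)
  then show ?case by (simp only: funpow.simps(2) end_act_comp[symmetric])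
qed (simp only: funpow.simps(1) end_act_id)

lemma on_geod_sym: "on_geod a b x \<Longrightarrow> on_geod b a x"
  unfolding on_geod_def by metis

lemma on_geod_end_act: "inj g \<Longrightarrow> on_geod a b x \<Longrightarrow> on_geod (end_act g a) (end_act g b) (g x)"
  unfolding on_geod_def end_act_def by (auto dest: injD) (metis comp_apply injD image_eqI)

lemma ipow_of_nat: "ipow t (int n) = t ^^ n"
  unfolding ipow_def by simp

lemma ipow_minus_of_nat: "ipow t (- int n) = inv t ^^ n"
  unfolding ipow_def by (cases "n = 0") auto

lemma ipow_0: "ipow t 0 = id"
  unfolding ipow_def by simp

lemma funpow_Aut: "f \<in> Aut E \<Longrightarrow> f ^^ n \<in> Aut E"
  by (induction n) (auto simp: Aut_id Aut_comp)

lemma ipow_Aut: "t \<in> Aut E \<Longrightarrow> ipow t j \<in> Aut E"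
  unfolding ipow_def by (simp add: funpow_Aut Aut_inv)

lemma end_act_ipow: "t \<in> Aut E \<Longrightarrow> end_act t \<omega> = \<omega> \<Longrightarrow> end_act (ipow t j) \<omega> = \<omega>"
  unfolding ipow_def by (simp add: end_act_funpow end_act_inv)

lemma ipow_plus_1:
  assumes t: "bij t" shows "ipow t (j + 1) = ipow t j \<circ> t"
proof (cases "j \<ge> 0")
  case True
  then obtain n where "j = int n" by (metis nonneg_eq_int)
  then show ?thesis
    using ipow_of_nat[of t "Suc n"] ipow_of_nat[of t n] by (simp add: funpow_Suc_right add.commute del: funpow.simps)
next
  case False
  define n where "n = nat (- j) - 1"
  have n: "j = - int (Suc n)" using False unfolding n_def by simp
  have "inv t \<circ> t = id" using t bij_is_inj inj_iff by blast
  then have "ipow t j \<circ> t = inv t ^^ n"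
    using n ipow_minus_of_nat[of t "Suc n"] by (simp add: funpow_Suc_right comp_assoc del: funpow.simps)
  also have "\<dots> = ipow t (j + 1)" using n ipow_minus_of_nat[of t n] by simp
  finally show ?thesis by simp
qed

lemma ipow_minus_1:
  assumes t: "bij t" shows "ipow t (j - 1) = ipow t j \<circ> inv t"
proof -
  have "t \<circ> inv t = id" using t bij_is_surj surj_iff by blast
  then show ?thesis using ipow_plus_1[OF t, of "j - 1"] by (simp add: comp_assoc)
qed

lemma ipow_add:
  assumes t: "bij t" shows "ipow t (a + b) = ipow t a \<circ> ipow t b"
proof (induction b rule: int_induct[where k = 0])
  case base then show ?case by (simp add: ipow_0)
next
  case (step1 i)
  have "ipow t (a + (i + 1)) = ipow t ((a + i) + 1)" by (simp only: add.assoc)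
  also have "\<dots> = ipow t a \<circ> (ipow t i \<circ> t)" by (simp only: ipow_plus_1[OF t] step1 comp_assoc)
  also have "\<dots> = ipow t a \<circ> ipow t (i + 1)" by (simp only: ipow_plus_1[OF t])
  finally show ?case .
next
  case (step2 i)
  have "ipow t (a + (i - 1)) = ipow t ((a + i) - 1)" by (simp only: add_diff_eq)
  also have "\<dots> = ipow t a \<circ> (ipow t i \<circ> inv t)" by (simp only: ipow_minus_1[OF t] step2 comp_assoc)
  also have "\<dots> = ipow t a \<circ> ipow t (i - 1)" by (simp only: ipow_minus_1[OF t])
  finally show ?case .
qed

lemma ipow_cancel:
  assumes t: "bij t"
  shows "ipow t j (ipow t (- j) x) = x" "ipow t (- j) (ipow t j x) = x"
  using ipow_add[OF t, of j "- j"] ipow_add[OF t, of "- j" j] ipow_0[of t]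
  by (metis comp_apply id_apply add.right_inverse add.left_inverse)+

lemma Hc_eq_if_same_preimage:
  assumes g: "g \<in> Aut E" and g': "g' \<in> Aut E" and w: "g w = v0" "g' w = v0"
  shows "Hc E v0 wp t g' = Hc E v0 wp t g"
proof -
  have K_transfer: "\<exists>k'\<in>Kgrp E v0. h' = k' \<circ> n \<circ> ipow t j"
    if h: "h \<in> Aut E" "h' \<in> Aut E" "h w = v0" "h' w = v0"
      and k: "k \<in> Kgrp E v0" "h = k \<circ> n \<circ> ipow t j" for h h' k n j
  proof
    have "h' \<circ> inv h \<circ> h = h'" using Aut_inv_comp[OF h(1)] by (simp add: comp_assoc)
    then show "h' = (h' \<circ> inv h \<circ> k) \<circ> n \<circ> ipow t j" unfolding k(2) by (simp add: comp_assoc)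
    have "inv h v0 = w" using h(3) Aut_inv_f_f[OF h(1)] by metis
    then show "h' \<circ> inv h \<circ> k \<in> Kgrp E v0"
      using k h unfolding Kgrp_def by (auto intro!: Aut_comp Aut_inv)
  qed
  have "(\<exists>k\<in>Kgrp E v0. \<exists>n\<in>Bgrp E wp. g' = k \<circ> n \<circ> ipow t j) \<longleftrightarrow>
        (\<exists>k\<in>Kgrp E v0. \<exists>n\<in>Bgrp E wp. g = k \<circ> n \<circ> ipow t j)" for j
    using K_transfer[OF g g' w] K_transfer[OF g' g w(2,1)] by meson
  then show ?thesis unfolding Hc_def by simp
qed

lemma dsw_eq_if_same_preimage:
  assumes rr: "rr \<in> Aut E" and g: "g \<in> Aut E" and g0: "g0 \<in> Aut E" and c: "c \<in> Aut E"
    and w: "g w = v0" "g0 w = v0"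
  shows "dsw q E v0 wp t rr s s' (g \<circ> c) = dsw q E v0 wp t rr s s' (g0 \<circ> c)"
proof -
  have "Hc E v0 wp t (g \<circ> c') = Hc E v0 wp t (g0 \<circ> c')" if c': "c' \<in> Aut E" for c'
    by (rule Hc_eq_if_same_preimage[OF Aut_comp[OF g0 c'] Aut_comp[OF g c'], of "inv c' w"])
      (use w Aut_f_inv_f[OF c'] in auto)
  from this[OF c] this[OF Aut_comp[OF c rr]] show ?thesis
    unfolding dsw_def by (simp add: comp_assoc)
qed

section \<open>Locally constant functions and quotient topologies\<close>

definition locally_constant :: "'a topology \<Rightarrow> ('a \<Rightarrow> 'b) \<Rightarrow> bool" where
  "locally_constant X F \<longleftrightarrow> (\<forall>x\<in>topspace X. \<exists>U. openin X U \<and> x \<in> U \<and> (\<forall>y\<in>U. F y = F x))"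

lemma Cc_lc_iff:
  "F \<in> Cc_lc X \<longleftrightarrow> locally_constant X F \<and> compactin X (X closure_of {x \<in> topspace X. F x \<noteq> 0})"
  unfolding Cc_lc_def locally_constant_def by simp

lemma locally_constant_iff_openin_levels:
  "locally_constant X F \<longleftrightarrow> (\<forall>c. openin X {x \<in> topspace X. F x = c})"
proof
  assume lc: "locally_constant X F"
  show "\<forall>c. openin X {x \<in> topspace X. F x = c}"
  proof
    fix c
    have "\<exists>U. openin X U \<and> x \<in> U \<and> U \<subseteq> {x \<in> topspace X. F x = c}"
      if x: "x \<in> topspace X" "F x = c" for x
    proof -
      obtain U where U: "openin X U" "x \<in> U" "\<forall>y\<in>U. F y = F x"
        using lc x(1) unfolding locally_constant_def by blast
      then have "U \<subseteq> {x \<in> topspace X. F x = c}" using openin_subset[OF U(1)] x(2) by blast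
      then show ?thesis using U(1,2) by blast
    qed
    then show "openin X {x \<in> topspace X. F x = c}" by (subst openin_subopen) blast
  qed
next
  assume levels: "\<forall>c. openin X {x \<in> topspace X. F x = c}"
  show "locally_constant X F"
    unfolding locally_constant_def
  proof
    fix x assume "x \<in> topspace X"
    then show "\<exists>U. openin X U \<and> x \<in> U \<and> (\<forall>y\<in>U. F y = F x)"
      using levels by (intro exI[of _ "{y \<in> topspace X. F y = F x}"]) simp
  qed
qed

lemma locally_constant_compose:
  assumes h: "continuous_map X Y h" and F: "locally_constant Y F"
  shows "locally_constant X (\<lambda>x. F (h x))"
  unfolding locally_constant_iff_openin_levels
proof
  fix c
  have "openin X {x \<in> topspace X. h x \<in> {y \<in> topspace Y. F y = c}}"
    using openin_continuous_map_preimage[OF h] F unfolding locally_constant_iff_openin_levels by blast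
  moreover have "{x \<in> topspace X. h x \<in> {y \<in> topspace Y. F y = c}} = {x \<in> topspace X. F (h x) = c}"
    using h unfolding continuous_map_def by fastforce
  ultimately show "openin X {x \<in> topspace X. F (h x) = c}" by simp
qed

lemma locally_constant_closedin_support:
  assumes "locally_constant X F" shows "closedin X {x \<in> topspace X. F x \<noteq> 0}"
proof -
  have "openin X {x \<in> topspace X. F x = 0}"
    using assms unfolding locally_constant_iff_openin_levels by blast
  moreover have "topspace X - {x \<in> topspace X. F x \<noteq> 0} = {x \<in> topspace X. F x = 0}" by auto
  ultimately show ?thesis by (simp add: closedin_def)
qed

lemma openin_finite_Ball:
  assumes "finite I" "\<And>i. i \<in> I \<Longrightarrow> openin X {x \<in> topspace X. P i x}"
  shows "openin X {x \<in> topspace X. \<forall>i\<in>I. P i x}"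
  using assms
proof (induction I rule: finite_induct)
  case (insert a I)
  have "{x \<in> topspace X. \<forall>i\<in>insert a I. P i x} =
        {x \<in> topspace X. P a x} \<inter> {x \<in> topspace X. \<forall>i\<in>I. P i x}"
    by auto
  then show ?case using insert by auto
qed simp

lemma istopology_qtop: "istopology (\<lambda>U. U \<subseteq> p ` topspace X \<and> openin X {x \<in> topspace X. p x \<in> U})"
proof -
  define L where "L U \<longleftrightarrow> U \<subseteq> p ` topspace X \<and> openin X {x \<in> topspace X. p x \<in> U}" for U
  have A: "L (S \<inter> T)" if S: "L S" and T: "L T" for S T
  proof -
    have "{x \<in> topspace X. p x \<in> S \<inter> T} = {x \<in> topspace X. p x \<in> S} \<inter> {x \<in> topspace X. p x \<in> T}" by auto
    then show ?thesis using S T unfolding L_def by auto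
  qed
  have B: "L (\<Union>K)" if K: "\<forall>U\<in>K. L U" for K
  proof -
    have "{x \<in> topspace X. p x \<in> \<Union>K} = \<Union>((\<lambda>U. {x \<in> topspace X. p x \<in> U}) ` K)" by auto
    then show ?thesis using K unfolding L_def by auto
  qed
  have "istopology L" unfolding istopology_def using A B by blast
  then show ?thesis unfolding L_def[abs_def] .
qed

lemma openin_qtop: "openin (qtop X p) U \<longleftrightarrow> U \<subseteq> p ` topspace X \<and> openin X {x \<in> topspace X. p x \<in> U}"
  unfolding qtop_def by (simp only: topology_inverse'[OF istopology_qtop])

lemma topspace_qtop: "topspace (qtop X p) = p ` topspace X"
proof
  show "topspace (qtop X p) \<subseteq> p ` topspace X" unfolding topspace_def openin_qtop by auto
  have "openin (qtop X p) (p ` topspace X)" unfolding openin_qtop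
  proof
    have "{x \<in> topspace X. p x \<in> p ` topspace X} = topspace X" by auto
    then show "openin X {x \<in> topspace X. p x \<in> p ` topspace X}" by simp
  qed simp
  then show "p ` topspace X \<subseteq> topspace (qtop X p)" using openin_subset by blast
qed

lemma continuous_map_qtop_proj: "continuous_map X (qtop X p) p"
  unfolding continuous_map_def topspace_qtop openin_qtop by auto

lemma continuous_map_from_qtop:
  assumes h: "continuous_map X Y h" and eq: "\<And>x. x \<in> topspace X \<Longrightarrow> \<phi> (p x) = h x"
  shows "continuous_map (qtop X p) Y \<phi>"
  unfolding continuous_map_def
proof (intro conjI allI impI)
  show "\<phi> \<in> topspace (qtop X p) \<rightarrow> topspace Y"
    using h eq unfolding topspace_qtop continuous_map_def by auto
  fix U assume U: "openin Y U"
  have "p x \<in> {y \<in> topspace (qtop X p). \<phi> y \<in> U} \<longleftrightarrow> h x \<in> U" if "x \<in> topspace X" for x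
    using that eq by (auto simp: topspace_qtop)
  then have "{x \<in> topspace X. p x \<in> {y \<in> topspace (qtop X p). \<phi> y \<in> U}} = {x \<in> topspace X. h x \<in> U}"
    by blast
  then show "openin (qtop X p) {x \<in> topspace (qtop X p). \<phi> x \<in> U}"
    unfolding openin_qtop using openin_continuous_map_preimage[OF h U] by (auto simp: topspace_qtop)
qed

lemma locally_constant_qtop:
  assumes "locally_constant X (\<lambda>x. F (p x))" shows "locally_constant (qtop X p) F"
proof -
  have "{x \<in> topspace X. p x \<in> {y \<in> p ` topspace X. F y = c}} = {x \<in> topspace X. F (p x) = c}" for c
    by auto
  then show ?thesis
    using assms unfolding locally_constant_iff_openin_levels openin_qtop topspace_qtop by auto
qed

lemma Gtop_topspace: "topspace (Gtop E) = Aut E"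
  unfolding Gtop_def by simp

lemma continuous_map_Gtop_eval: "continuous_map (Gtop E) (discrete_topology UNIV) (\<lambda>g. g a)"
  unfolding Gtop_def
  by (rule continuous_map_from_subtopology, rule continuous_map_product_projection) simp

lemma openin_Gtop_eval: "openin (Gtop E) {g \<in> Aut E. g a \<in> W}"
  using openin_continuous_map_preimage[OF continuous_map_Gtop_eval[of E a], of W] by (simp add: Gtop_topspace)

lemma continuous_map_Gtop_right_mult:
  assumes c: "c \<in> Aut E"
  shows "continuous_map (Gtop E) (Gtop E) (\<lambda>g. g \<circ> c)"
proof -
  have "continuous_map (Gtop E) (product_topology (\<lambda>_. discrete_topology UNIV) UNIV) (\<lambda>g. g \<circ> c)"
    unfolding continuous_map_componentwise_UNIV by (simp add: comp_def continuous_map_Gtop_eval)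
  moreover have "(\<lambda>g. g \<circ> c) \<in> topspace (Gtop E) \<rightarrow> Aut E" using Aut_comp[OF _ c] by (auto simp: Gtop_topspace)
  ultimately show ?thesis unfolding Gtop_def[of E] continuous_map_in_subtopology
    by (simp add: Gtop_def[symmetric])
qed

lemma openin_Gtop_agree:
  assumes "finite T" shows "openin (Gtop E) {g \<in> Aut E. \<forall>x\<in>T. g x = g0 x}"
  using openin_finite_Ball[OF assms, of "Gtop E" "\<lambda>x g. g x = g0 x"] openin_Gtop_eval[of E _ "{g0 _}"]
  by (simp add: Gtop_topspace)

lemma lcoset_mem: "id \<in> H \<Longrightarrow> g \<in> lcoset g H"
  unfolding lcoset_def by (metis comp_id image_eqI)

lemma lcoset_right_mult:
  assumes comp: "\<And>a b. a \<in> H \<Longrightarrow> b \<in> H \<Longrightarrow> a \<circ> b \<in> H"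
    and inv: "\<And>a. a \<in> H \<Longrightarrow> inv a \<in> H" and bij: "\<And>a. a \<in> H \<Longrightarrow> a \<circ> inv a = id"
    and u: "u \<in> H"
  shows "lcoset (g \<circ> u) H = lcoset g H"
proof
  show "lcoset (g \<circ> u) H \<subseteq> lcoset g H"
    unfolding lcoset_def using comp u by (auto simp: comp_assoc)
  show "lcoset g H \<subseteq> lcoset (g \<circ> u) H"
  proof
    fix x assume "x \<in> lcoset g H"
    then obtain h where h: "h \<in> H" "x = g \<circ> h" unfolding lcoset_def by auto
    have "x = (g \<circ> u) \<circ> (inv u \<circ> h)" using h bij[OF u] by (metis comp_assoc id_comp)
    moreover have "inv u \<circ> h \<in> H" using comp inv u h by blast
    ultimately show "x \<in> lcoset (g \<circ> u) H" unfolding lcoset_def by blast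
  qed
qed

lemma the_elem_image_lcoset:
  assumes "id \<in> H" "\<And>u. u \<in> H \<Longrightarrow> \<phi> (g \<circ> u) = \<phi> g"
  shows "the_elem (\<phi> ` lcoset g H) = \<phi> g"
proof -
  have "\<phi> ` lcoset g H = {\<phi> g}" using assms lcoset_mem[of H g] unfolding lcoset_def by auto
  then show ?thesis by simp
qed

section \<open>The geodesic and the groups M and M<\<tau>>\<close>

locale geodesic_setting = tree E for E :: "'v \<Rightarrow> 'v \<Rightarrow> bool" +
  fixes v0 :: 'v and wm wp :: "(nat \<Rightarrow> 'v) set" and t rr :: "'v \<Rightarrow> 'v"
  assumes wm: "wm \<in> ends E" and wp: "wp \<in> ends E"
    and v0_geod: "on_geod wm wp v0"
    and t_Aut: "t \<in> Aut E" and t_wm: "end_act t wm = wm" and t_wp: "end_act t wp = wp"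
    and t_transl: "\<And>x. on_geod wm wp x \<Longrightarrow> \<exists>r\<in>wp. r 0 = x \<and> t x = r 1"
    and rr_K: "rr \<in> Kgrp E v0" and rr_inv: "rr \<circ> rr = id"
    and rr_conj: "\<And>j. rr \<circ> ipow t j \<circ> inv rr = ipow t (- j)"
begin

abbreviation M where "M \<equiv> Mgrp E v0 wm wp"

definition ray :: "(nat \<Rightarrow> 'v) set \<Rightarrow> nat \<Rightarrow> 'v" where
  "ray \<omega> = (THE r. r \<in> \<omega> \<and> r 0 = v0)"

lemma ray_eqI: "\<omega> \<in> ends E \<Longrightarrow> r \<in> \<omega> \<Longrightarrow> r 0 = v0 \<Longrightarrow> ray \<omega> = r"
  unfolding ray_def using ends_eqI by (intro the_equality) auto

lemma ray_in_end: "\<omega> \<in> ends E \<Longrightarrow> ray \<omega> \<in> \<omega> \<and> ray \<omega> 0 = v0"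
  using ray_eqI ends_ray_from by metis

lemma ray_shift_eqI: "\<omega> \<in> ends E \<Longrightarrow> r \<in> \<omega> \<Longrightarrow> r 0 = ray \<omega> n \<Longrightarrow> r = (\<lambda>i. ray \<omega> (i + n))"
  using ends_eqI ends_shift ray_in_end by (metis add_0)

lemma ray_nb: "\<omega> \<in> ends E \<Longrightarrow> E (ray \<omega> i) (ray \<omega> (Suc i)) \<and> ray \<omega> i \<noteq> ray \<omega> (Suc (Suc i))"
  using ray_in_end ends_nb_chain unfolding nb_chain_def by blast

lemma ray_wm_1_ne_ray_wp_1: "ray wm 1 \<noteq> ray wp 1"
  using v0_geod ray_eqI[OF wm] ray_eqI[OF wp] unfolding on_geod_def by metis

lemma on_geod_ipow: "on_geod wm wp x \<Longrightarrow> on_geod wm wp (ipow t j x)"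
  using on_geod_end_act[OF bij_is_inj[OF Aut_bij[OF ipow_Aut[OF t_Aut]]]]
  by (metis end_act_ipow[OF t_Aut t_wm] end_act_ipow[OF t_Aut t_wp])

lemma funpow_t_v0: "(t ^^ n) v0 = ray wp n"
proof (induction n)
  case 0 then show ?case using ray_in_end[OF wp] by simp
next
  case (Suc n)
  have "on_geod wm wp (ray wp n)" using on_geod_ipow[OF v0_geod, of "int n"] Suc by (simp add: ipow_of_nat)
  then obtain r where r: "r \<in> wp" "r 0 = ray wp n" "t (ray wp n) = r 1" using t_transl by blast
  then show ?case using Suc ray_shift_eqI[OF wp r(1,2)] by simp
qed

lemma t_ray_wm: "t (ray wm (Suc n)) = ray wm n"
proof -
  \<comment> \<open>t \<circ> ray wm is the chain of wm starting at t v0 = ray wp 1, which is c\<close>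
  define c where "c i = (if i = 0 then ray wp 1 else ray wm (i - 1))" for i
  have "nb_chain E c" unfolding nb_chain_def
  proof (intro conjI allI)
    fix i
    show "E (c i) (c (Suc i))"
      using ray_nb[OF wm, of "i - 1"] ray_nb[OF wp, of 0] sym ray_in_end[OF wm] ray_in_end[OF wp] unfolding c_def
      by (cases i) auto
    show "c i \<noteq> c (Suc (Suc i))"
      using ray_nb[OF wm, of "i - 1"] ray_wm_1_ne_ray_wp_1 unfolding c_def by (cases i) auto
  qed
  moreover have "chain_equiv (ray wm) c" unfolding chain_equiv_def
    by (rule exI[of _ 0], rule exI[of _ 1]) (auto simp: c_def)
  ultimately have c: "c \<in> wm" using ends_memI[OF wm] ray_in_end[OF wm] by blast
  have "t \<circ> ray wm \<in> wm" using t_wm ray_in_end[OF wm] unfolding end_act_def by blast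
  moreover have "(t \<circ> ray wm) 0 = c 0" using funpow_t_v0[of 1] ray_in_end[OF wm] by (simp add: c_def)
  ultimately have "t \<circ> ray wm = c" using ends_eqI[OF wm _ c] by blast
  then show ?thesis by (metis c_def comp_apply diff_Suc_1 nat.distinct(1))
qed

lemma funpow_inv_t_v0: "(inv t ^^ n) v0 = ray wm n"
proof (induction n)
  case 0 then show ?case using ray_in_end[OF wm] by simp
next
  case (Suc n)
  then show ?case using t_ray_wm[of n] Aut_inv_f_f[OF t_Aut] by (metis comp_apply funpow.simps(2))
qed

lemma ipow_t_v0_inj: "inj (\<lambda>j. ipow t j v0)"
proof -
  have ne: "ipow t d v0 \<noteq> v0" if "0 < d" for d
  proof -
    obtain n where n: "d = int n" "0 < n" using \<open>0 < d\<close> zero_less_imp_eq_int by blast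
    have "ray wp n \<noteq> ray wp 0"
      by (rule nb_chain_start_ne) (use ray_in_end[OF wp] ends_nb_chain[OF wp] n in auto)
    then show ?thesis using funpow_t_v0[of n] ray_in_end[OF wp] n by (simp add: ipow_of_nat)
  qed
  show ?thesis
  proof (rule injI)
    fix i j assume eq: "ipow t i v0 = ipow t j v0"
    have shift: "ipow t (a - b) v0 = v0" if "ipow t a v0 = ipow t b v0" for a b
      using that ipow_add[OF Aut_bij[OF t_Aut], of "- b" a] ipow_cancel(2)[OF Aut_bij[OF t_Aut]]
      by (metis add.commute comp_apply uminus_add_conv_diff)
    show "i = j" using ne[of "i - j"] ne[of "j - i"] shift[OF eq] shift[OF eq[symmetric]] by fastforce
  qed
qed

lemma rr_Aut: "rr \<in> Aut E" and rr_v0: "rr v0 = v0"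
  using rr_K unfolding Kgrp_def by auto

lemma inv_rr: "inv rr = rr"
  using inv_unique_comp[OF rr_inv rr_inv] .

lemma rr_ray_wp: "rr (ray wp n) = ray wm n"
proof -
  have "rr (ray wp n) = (rr \<circ> ipow t (int n) \<circ> inv rr) v0"
    using funpow_t_v0[of n] inv_rr rr_v0 by (simp add: ipow_of_nat)
  also have "\<dots> = ray wm n" by (simp only: rr_conj ipow_minus_of_nat funpow_inv_t_v0)
  finally show ?thesis .
qed

lemma end_act_rr_wp: "end_act rr wp = wm"
  by (rule end_act_eqI[OF rr_Aut wp wm]) (use rr_ray_wp ray_in_end[OF wm] ray_in_end[OF wp] in \<open>auto simp: comp_def\<close>)

lemma end_act_rr_wm: "end_act rr wm = wp"
  using end_act_rr_wp end_act_comp rr_inv end_act_id by metis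

lemma on_geod_rr: "on_geod wm wp x \<Longrightarrow> on_geod wm wp (rr x)"
  using on_geod_end_act[OF bij_is_inj[OF Aut_bij[OF rr_Aut]]] on_geod_sym
  by (metis end_act_rr_wp end_act_rr_wm)

lemma on_geod_ray_wp: "on_geod wm wp (ray wp n)"
  using on_geod_ipow[OF v0_geod, of "int n"] funpow_t_v0 by (simp add: ipow_of_nat)

lemma Mgrp_D:
  assumes "m \<in> M" shows "m \<in> Aut E" "m v0 = v0" "on_geod wm wp x \<Longrightarrow> m x = x"
  using assms unfolding Mgrp_def Kgrp_def by auto

lemma Mgrp_I: "m \<in> Aut E \<Longrightarrow> (\<And>x. on_geod wm wp x \<Longrightarrow> m x = x) \<Longrightarrow> m \<in> M"
  unfolding Mgrp_def Kgrp_def using v0_geod by auto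

lemma id_Mgrp: "id \<in> M"
  by (rule Mgrp_I) (auto simp: Aut_id)

lemma Mgrp_comp: "a \<in> M \<Longrightarrow> b \<in> M \<Longrightarrow> a \<circ> b \<in> M"
  by (rule Mgrp_I) (auto simp: Mgrp_D Aut_comp)

lemma Mgrp_inv:
  assumes m: "m \<in> M" shows "inv m \<in> M"
proof (rule Mgrp_I)
  show "inv m \<in> Aut E" using Aut_inv Mgrp_D(1)[OF m] by blast
  fix x assume "on_geod wm wp x"
  then show "inv m x = x" using Mgrp_D(3)[OF m] Aut_inv_f_f[OF Mgrp_D(1)[OF m]] by metis
qed

lemma Mgrp_end_act_wp:
  assumes m: "m \<in> M" shows "end_act m wp = wp"
proof -
  have "m \<circ> ray wp = ray wp" using Mgrp_D(3)[OF m on_geod_ray_wp] by (simp add: fun_eq_iff)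
  then show ?thesis using end_act_eqI[OF Mgrp_D(1)[OF m] wp wp, of "ray wp"] ray_in_end[OF wp] by simp
qed

lemma Mgrp_conj_ipow: "m \<in> M \<Longrightarrow> ipow t j \<circ> m \<circ> ipow t (- j) \<in> M"
proof (rule Mgrp_I)
  assume m: "m \<in> M"
  show "ipow t j \<circ> m \<circ> ipow t (- j) \<in> Aut E"
    using Mgrp_D(1)[OF m] ipow_Aut[OF t_Aut] Aut_comp by blast
  fix x assume "on_geod wm wp x"
  then show "(ipow t j \<circ> m \<circ> ipow t (- j)) x = x"
    using Mgrp_D(3)[OF m on_geod_ipow] ipow_cancel[OF Aut_bij[OF t_Aut]] by simp
qed

lemma rr_rr: "rr (rr x) = x"
  using rr_inv by (metis comp_apply id_apply)

lemma Mgrp_conj_rr: "m \<in> M \<Longrightarrow> rr \<circ> m \<circ> rr \<in> M"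
proof (rule Mgrp_I)
  assume m: "m \<in> M"
  show "rr \<circ> m \<circ> rr \<in> Aut E" using Mgrp_D(1)[OF m] rr_Aut Aut_comp by blast
  fix x assume "on_geod wm wp x"
  then show "(rr \<circ> m \<circ> rr) x = x" using Mgrp_D(3)[OF m on_geod_rr] rr_rr by simp
qed

lemma Bgrp_fixes_ray:
  assumes n: "n \<in> Bgrp E wp" shows "\<exists>i. n (ray wp i) = ray wp i"
proof -
  obtain y where y: "n y = y" and nA: "n \<in> Aut E" and nwp: "end_act n wp = wp"
    using n unfolding Bgrp_def by auto
  obtain r where r: "r \<in> wp" "r 0 = y" using ends_ray_from[OF wp] by blast
  have "n \<circ> r \<in> wp" using nwp r(1) unfolding end_act_def by blast
  then have fix_r: "n \<circ> r = r" by (rule ends_eqI[OF wp _ r(1)]) (simp add: r(2) y)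
  obtain k l where "\<forall>i. ray wp (i + k) = r (i + l)"
    using ends_chain_equiv[OF wp _ r(1)] ray_in_end[OF wp] unfolding chain_equiv_def by blast
  then have "ray wp k = r l" by (metis add_0)
  then show ?thesis using fix_r by (metis comp_apply)
qed

lemma Bgrp_conj:
  assumes a: "a \<in> Aut E" "end_act a wp = wp" and n: "n \<in> Bgrp E wp"
  shows "inv a \<circ> n \<circ> a \<in> Bgrp E wp"
proof -
  obtain y where y: "n y = y" and nA: "n \<in> Aut E" and nwp: "end_act n wp = wp"
    using n unfolding Bgrp_def by auto
  have "end_act (inv a \<circ> n \<circ> a) wp = wp"
    by (simp only: end_act_comp[symmetric] a(2) nwp end_act_inv[OF a])
  moreover have "(inv a \<circ> n \<circ> a) (inv a y) = inv a y" using y Aut_f_inv_f[OF a(1)] by simp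
  moreover have "inv a \<circ> n \<circ> a \<in> Aut E" using a(1) nA by (simp add: Aut_comp Aut_inv)
  ultimately show ?thesis unfolding Bgrp_def by blast
qed

lemma Bgrp_comp_Mgrp:
  assumes n: "n \<in> Bgrp E wp" and m: "m \<in> M" shows "n \<circ> m \<in> Bgrp E wp"
proof -
  obtain i where i: "n (ray wp i) = ray wp i" using Bgrp_fixes_ray[OF n] by blast
  have "end_act (n \<circ> m) wp = wp"
    using n Mgrp_end_act_wp[OF m] unfolding Bgrp_def by (simp flip: end_act_comp)
  moreover have "(n \<circ> m) (ray wp i) = ray wp i" using i Mgrp_D(3)[OF m on_geod_ray_wp] by simp
  moreover have "n \<circ> m \<in> Aut E" using n Mgrp_D(1)[OF m] unfolding Bgrp_def by (simp add: Aut_comp)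
  ultimately show ?thesis unfolding Bgrp_def by blast
qed

lemma Iwasawa_right_Mgrp:
  assumes m: "m \<in> M" and k: "k \<in> Kgrp E v0" and n: "n \<in> Bgrp E wp"
  shows "\<exists>k'\<in>Kgrp E v0. \<exists>n'\<in>Bgrp E wp. k \<circ> n \<circ> ipow t j \<circ> m = k' \<circ> n' \<circ> ipow t j"
proof -
  \<comment> \<open>k n \<tau>^j m = (k m) (m^-1 n m) (m^-1 \<tau>^j m \<tau>^-j) \<tau>^j, and the last factor lies in M\<close>
  have mA: "m \<in> Aut E" using Mgrp_D(1)[OF m] .
  define m' where "m' = inv m \<circ> (ipow t j \<circ> m \<circ> ipow t (- j))"
  have m': "m' \<in> M" unfolding m'_def using Mgrp_comp Mgrp_inv Mgrp_conj_ipow m by blast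
  have "inv m \<circ> n \<circ> m \<circ> m' \<in> Bgrp E wp"
    using Bgrp_comp_Mgrp[OF Bgrp_conj[OF mA Mgrp_end_act_wp[OF m] n] m'] .
  moreover have "k \<circ> m \<in> Kgrp E v0" using k Mgrp_D[OF m] unfolding Kgrp_def by (auto intro: Aut_comp)
  moreover have "k \<circ> n \<circ> ipow t j \<circ> m = (k \<circ> m) \<circ> (inv m \<circ> n \<circ> m \<circ> m') \<circ> ipow t j"
    unfolding m'_def using Aut_f_inv_f[OF mA] ipow_cancel[OF Aut_bij[OF t_Aut]] by (simp add: fun_eq_iff)
  ultimately show ?thesis by blast
qed

lemma Hc_right_Mgrp:
  assumes m: "m \<in> M" shows "Hc E v0 wp t (x \<circ> m) = Hc E v0 wp t x"
proof -
  have xm: "x \<circ> m \<circ> inv m = x" using Aut_comp_inv[OF Mgrp_D(1)[OF m]] by (simp add: comp_assoc)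
  have "(\<exists>k\<in>Kgrp E v0. \<exists>n\<in>Bgrp E wp. x \<circ> m = k \<circ> n \<circ> ipow t j) \<longleftrightarrow>
        (\<exists>k\<in>Kgrp E v0. \<exists>n\<in>Bgrp E wp. x = k \<circ> n \<circ> ipow t j)" for j
  proof
    assume "\<exists>k\<in>Kgrp E v0. \<exists>n\<in>Bgrp E wp. x \<circ> m = k \<circ> n \<circ> ipow t j"
    then obtain k n where "k \<in> Kgrp E v0" "n \<in> Bgrp E wp" "x \<circ> m = k \<circ> n \<circ> ipow t j" by blast
    then show "\<exists>k\<in>Kgrp E v0. \<exists>n\<in>Bgrp E wp. x = k \<circ> n \<circ> ipow t j"
      using Iwasawa_right_Mgrp[OF Mgrp_inv[OF m], of k n j] xm by simp
  next
    assume "\<exists>k\<in>Kgrp E v0. \<exists>n\<in>Bgrp E wp. x = k \<circ> n \<circ> ipow t j"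
    then obtain k n where "k \<in> Kgrp E v0" "n \<in> Bgrp E wp" "x = k \<circ> n \<circ> ipow t j" by blast
    then show "\<exists>k\<in>Kgrp E v0. \<exists>n\<in>Bgrp E wp. x \<circ> m = k \<circ> n \<circ> ipow t j"
      using Iwasawa_right_Mgrp[OF m, of k n j] by simp
  qed
  then show ?thesis unfolding Hc_def by simp
qed

lemma dsw_right_Mgrp:
  assumes m: "m \<in> M" shows "dsw q E v0 wp t rr s s' (x \<circ> m) = dsw q E v0 wp t rr s s' x"
proof -
  have "x \<circ> m \<circ> rr = (x \<circ> rr) \<circ> (rr \<circ> m \<circ> rr)" by (simp add: fun_eq_iff rr_rr)
  then show ?thesis
    unfolding dsw_def using Hc_right_Mgrp[OF m] Hc_right_Mgrp[OF Mgrp_conj_rr[OF m]] by simp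
qed

abbreviation MT where "MT \<equiv> Mtau M t"

lemma Mtau_I: "m \<in> M \<Longrightarrow> m \<circ> ipow t j \<in> MT"
  unfolding Mtau_def by blast

lemma Mtau_E:
  assumes "u \<in> MT" obtains m j where "m \<in> M" "u = m \<circ> ipow t j"
  using assms unfolding Mtau_def by blast

lemma Mgrp_subset_Mtau: "m \<in> M \<Longrightarrow> m \<in> MT"
  using Mtau_I[of m 0] by (simp add: ipow_0)

lemma Mtau_Aut: "u \<in> MT \<Longrightarrow> u \<in> Aut E"
  by (elim Mtau_E) (simp add: Mgrp_D(1) ipow_Aut[OF t_Aut] Aut_comp)

lemma Mtau_comp:
  assumes u: "u \<in> MT" and v: "v \<in> MT" shows "u \<circ> v \<in> MT"
proof -
  obtain m a where ma: "m \<in> M" "u = m \<circ> ipow t a" using Mtau_E[OF u] by blast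
  obtain m' b where mb: "m' \<in> M" "v = m' \<circ> ipow t b" using Mtau_E[OF v] by blast
  have "u \<circ> v = (m \<circ> (ipow t a \<circ> m' \<circ> ipow t (- a))) \<circ> ipow t (a + b)"
    unfolding ma mb ipow_add[OF Aut_bij[OF t_Aut]] using ipow_cancel[OF Aut_bij[OF t_Aut]]
    by (simp add: fun_eq_iff)
  moreover have "m \<circ> (ipow t a \<circ> m' \<circ> ipow t (- a)) \<in> M"
    using Mgrp_comp Mgrp_conj_ipow ma mb by blast
  ultimately show ?thesis using Mtau_I by simp
qed

lemma Mtau_inv:
  assumes u: "u \<in> MT" shows "inv u \<in> MT"
proof -
  obtain m a where ma: "m \<in> M" "u = m \<circ> ipow t a" using Mtau_E[OF u] by blast
  have mA: "m \<in> Aut E" using Mgrp_D(1)[OF ma(1)] .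
  note cancel = ipow_cancel[OF Aut_bij[OF t_Aut]]
  have "inv u = ipow t (- a) \<circ> inv m"
  proof (rule inv_unique_comp)
    show "u \<circ> (ipow t (- a) \<circ> inv m) = id" unfolding ma using cancel Aut_f_inv_f[OF mA] by (simp add: fun_eq_iff)
    show "ipow t (- a) \<circ> inv m \<circ> u = id" unfolding ma using cancel Aut_inv_f_f[OF mA] by (simp add: fun_eq_iff)
  qed
  also have "\<dots> = (ipow t (- a) \<circ> inv m \<circ> ipow t (- (- a))) \<circ> ipow t (- a)"
    using cancel by (simp add: fun_eq_iff)
  finally show ?thesis using Mtau_I[OF Mgrp_conj_ipow[OF Mgrp_inv[OF ma(1)]], of "- a" "- a"] by simp
qed

end

section \<open>The weighted Radon transform\<close>

locale radon_setting = geodesic_setting E v0 wm wp t rr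
  for E :: "'v \<Rightarrow> 'v \<Rightarrow> bool" and v0 wm wp t rr +
  fixes q :: nat and s s' :: complex and f :: "('v \<Rightarrow> 'v) set \<Rightarrow> complex"
  assumes f: "f \<in> Cc_lc (qtop (Gtop E) (\<lambda>g. lcoset g (Mgrp E v0 wm wp)))"
begin

abbreviation XM where "XM \<equiv> qtop (Gtop E) (\<lambda>g. lcoset g M)"
abbreviation XT where "XT \<equiv> qtop (Gtop E) (\<lambda>g. lcoset g MT)"
abbreviation R where "R \<equiv> radon q E v0 wm wp t rr s s' f"

definition radon_term :: "('v \<Rightarrow> 'v) \<Rightarrow> int \<Rightarrow> complex" where
  "radon_term g j = f (lcoset (g \<circ> ipow t j) M) * dsw q E v0 wp t rr s (- cnj s') (g \<circ> ipow t j)"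

lemma radon_eq_infsum: "R g = infsum (radon_term g) UNIV"
  unfolding radon_def radon_term_def by simp

lemma topspace_XM: "topspace XM = (\<lambda>g. lcoset g M) ` Aut E"
  by (simp add: topspace_qtop Gtop_topspace)

lemma topspace_XT: "topspace XT = (\<lambda>g. lcoset g MT) ` Aut E"
  by (simp add: topspace_qtop Gtop_topspace)

lemma lcoset_right_Mgrp: "m \<in> M \<Longrightarrow> lcoset (g \<circ> m) M = lcoset g M"
  by (rule lcoset_right_mult[OF Mgrp_comp Mgrp_inv Aut_comp_inv[OF Mgrp_D(1)]])

lemma lcoset_right_Mtau: "u \<in> MT \<Longrightarrow> lcoset (g \<circ> u) MT = lcoset g MT"
  by (rule lcoset_right_mult[OF Mtau_comp Mtau_inv Aut_comp_inv[OF Mtau_Aut]])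

lemma radon_term_right_Mgrp:
  assumes m: "m \<in> M" shows "radon_term (g \<circ> m) j = radon_term g j"
proof -
  define m' where "m' = ipow t (- j) \<circ> m \<circ> ipow t (- (- j))"
  have m': "m' \<in> M" unfolding m'_def using Mgrp_conj_ipow[OF m] .
  have "g \<circ> m \<circ> ipow t j = (g \<circ> ipow t j) \<circ> m'"
    unfolding m'_def using ipow_cancel[OF Aut_bij[OF t_Aut]] by (simp add: fun_eq_iff)
  then show ?thesis unfolding radon_term_def using lcoset_right_Mgrp[OF m'] dsw_right_Mgrp[OF m'] by simp
qed

lemma radon_right_Mtau:
  assumes u: "u \<in> MT" shows "R (g \<circ> u) = R g"
proof -
  obtain m k where mk: "m \<in> M" "u = m \<circ> ipow t k" using Mtau_E[OF u] by blast
  have "g \<circ> u \<circ> ipow t j = g \<circ> m \<circ> ipow t (k + j)" for j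
    unfolding mk ipow_add[OF Aut_bij[OF t_Aut]] by (simp add: comp_assoc)
  then have "infsum (radon_term (g \<circ> u)) UNIV = infsum (\<lambda>j. radon_term (g \<circ> m) (k + j)) UNIV"
    unfolding radon_term_def by simp
  also have "\<dots> = infsum (radon_term (g \<circ> m)) UNIV"
    by (rule infsum_reindex_bij_betw) (rule bij_betwI[of _ _ _ "\<lambda>j. j - k"], auto)
  also have "\<dots> = infsum (radon_term g) UNIV"
  proof -
    have "radon_term (g \<circ> m) = radon_term g" by (rule ext) (rule radon_term_right_Mgrp[OF mk(1)])
    then show ?thesis by simp
  qed
  finally show ?thesis unfolding radon_eq_infsum .
qed

definition supp_f :: "('v \<Rightarrow> 'v) set set" where
  "supp_f = XM closure_of {P \<in> topspace XM. f P \<noteq> 0}"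

lemma compactin_supp_f: "compactin XM supp_f"
  using f unfolding Cc_lc_iff supp_f_def by (rule conjunct2)

lemma radon_term_nonzero_imp_supp_f:
  assumes g: "g \<in> Aut E" and nz: "radon_term g j \<noteq> 0"
  shows "lcoset (g \<circ> ipow t j) M \<in> supp_f"
proof -
  have "lcoset (g \<circ> ipow t j) M \<in> topspace XM"
    unfolding topspace_XM using Aut_comp[OF g ipow_Aut[OF t_Aut]] by (rule imageI)
  moreover have "f (lcoset (g \<circ> ipow t j) M) \<noteq> 0" using nz unfolding radon_term_def by simp
  ultimately have "lcoset (g \<circ> ipow t j) M \<in> {P \<in> topspace XM. f P \<noteq> 0}" by simp
  moreover have "{P \<in> topspace XM. f P \<noteq> 0} \<subseteq> supp_f"
    unfolding supp_f_def by (rule closure_of_subset) (rule Collect_restrict)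
  ultimately show ?thesis by (rule subsetD[rotated])
qed

definition base_vertex :: "('v \<Rightarrow> 'v) set \<Rightarrow> 'v" where
  "base_vertex P = the_elem ((\<lambda>h. h v0) ` P)"

lemma base_vertex_lcoset: "base_vertex (lcoset g M) = g v0"
  unfolding base_vertex_def by (rule the_elem_image_lcoset[OF id_Mgrp]) (simp add: Mgrp_D(2))

definition supp_vertices :: "'v set" where
  "supp_vertices = base_vertex ` supp_f"

lemma finite_supp_vertices: "finite supp_vertices"
proof -
  have "continuous_map XM (discrete_topology UNIV) base_vertex"
    by (rule continuous_map_from_qtop[OF continuous_map_Gtop_eval[of E v0]]) (simp add: base_vertex_lcoset)
  then have "compactin (discrete_topology UNIV) supp_vertices"
    unfolding supp_vertices_def by (rule image_compactin[OF compactin_supp_f])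
  then show ?thesis by (simp add: compactin_discrete_topology)
qed

definition J :: "('v \<Rightarrow> 'v) \<Rightarrow> int set" where
  "J g0 = {j. ipow t j v0 \<in> inv g0 ` supp_vertices}"

lemma finite_J: "finite (J g0)"
  unfolding J_def using finite_vimageI[OF finite_imageI[OF finite_supp_vertices] ipow_t_v0_inj]
  by (simp add: vimage_def)

lemma radon_term_nonzero_imp_J:
  assumes g0: "g0 \<in> Aut E" and g: "g \<in> Aut E" and agree: "\<forall>x\<in>inv g0 ` supp_vertices. g x = g0 x"
    and nz: "radon_term g j \<noteq> 0"
  shows "j \<in> J g0"
proof -
  define y where "y = g (ipow t j v0)"
  have "y = base_vertex (lcoset (g \<circ> ipow t j) M)" unfolding y_def base_vertex_lcoset by simp
  then have "y \<in> supp_vertices"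
    unfolding supp_vertices_def using radon_term_nonzero_imp_supp_f[OF g nz] by (rule image_eqI)
  then have x: "inv g0 y \<in> inv g0 ` supp_vertices" by blast
  then have "g (inv g0 y) = g0 (inv g0 y)" using agree by blast
  also have "\<dots> = g (ipow t j v0)" unfolding y_def by (rule Aut_f_inv_f[OF g0])
  finally have "inv g0 y = ipow t j v0" using injD[OF bij_is_inj[OF Aut_bij[OF g]]] by blast
  then show ?thesis using x unfolding J_def by simp
qed

lemma finite_radon_support:
  assumes g: "g \<in> Aut E" shows "finite {j. radon_term g j \<noteq> 0}"
proof (rule finite_subset[OF _ finite_J])
  show "{j. radon_term g j \<noteq> 0} \<subseteq> J g" using radon_term_nonzero_imp_J[OF g g] by blast
qed

lemma radon_eq_sum_J:
  assumes g0: "g0 \<in> Aut E" and g: "g \<in> Aut E" and agree: "\<forall>x\<in>inv g0 ` supp_vertices. g x = g0 x"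
  shows "R g = sum (radon_term g) (J g0)"
proof -
  have "infsum (radon_term g) UNIV = infsum (radon_term g) (J g0)"
    by (rule infsum_cong_neutral) (use radon_term_nonzero_imp_J[OF g0 g agree] in auto)
  then show ?thesis unfolding radon_eq_infsum using finite_J by simp
qed

lemma locally_constant_f_right_mult:
  assumes c: "c \<in> Aut E" shows "locally_constant (Gtop E) (\<lambda>g. f (lcoset (g \<circ> c) M))"
proof -
  have "continuous_map (Gtop E) XM (\<lambda>g. lcoset (g \<circ> c) M)"
    using continuous_map_compose[OF continuous_map_Gtop_right_mult[OF c] continuous_map_qtop_proj]
    by (simp add: comp_def)
  then show ?thesis using locally_constant_compose f unfolding Cc_lc_iff by blast
qed

text \<open>On this neighbourhood of g0 the Radon sum runs over J g0 and each of its terms is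
  constant: f by local constancy, and the weight because g and g0 map g0^-1 o to o.\<close>
definition nbhd :: "('v \<Rightarrow> 'v) \<Rightarrow> ('v \<Rightarrow> 'v) set" where
  "nbhd g0 = {g \<in> Aut E. (\<forall>x\<in>inv g0 ` insert v0 supp_vertices. g x = g0 x) \<and>
     (\<forall>j\<in>J g0. f (lcoset (g \<circ> ipow t j) M) = f (lcoset (g0 \<circ> ipow t j) M))}"

lemma openin_nbhd: "openin (Gtop E) (nbhd g0)"
proof -
  have "openin (Gtop E) {g \<in> topspace (Gtop E).
      \<forall>j\<in>J g0. f (lcoset (g \<circ> ipow t j) M) = f (lcoset (g0 \<circ> ipow t j) M)}"
    using finite_J locally_constant_f_right_mult[OF ipow_Aut[OF t_Aut]]
    by (intro openin_finite_Ball) (auto simp: locally_constant_iff_openin_levels)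
  moreover have "openin (Gtop E) {g \<in> Aut E. \<forall>x\<in>inv g0 ` insert v0 supp_vertices. g x = g0 x}"
    using finite_supp_vertices by (intro openin_Gtop_agree) simp
  moreover have "nbhd g0 = {g \<in> Aut E. \<forall>x\<in>inv g0 ` insert v0 supp_vertices. g x = g0 x} \<inter>
      {g \<in> topspace (Gtop E). \<forall>j\<in>J g0. f (lcoset (g \<circ> ipow t j) M) = f (lcoset (g0 \<circ> ipow t j) M)}"
    unfolding nbhd_def Gtop_topspace by blast
  ultimately show ?thesis by auto
qed

lemma radon_nbhd:
  assumes g0: "g0 \<in> Aut E" and g: "g \<in> nbhd g0" shows "R g = R g0"
proof -
  have gA: "g \<in> Aut E" and agree: "\<forall>x\<in>inv g0 ` supp_vertices. g x = g0 x"
    and w: "g (inv g0 v0) = v0"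
    and f_eq: "\<forall>j\<in>J g0. f (lcoset (g \<circ> ipow t j) M) = f (lcoset (g0 \<circ> ipow t j) M)"
    using g Aut_f_inv_f[OF g0] unfolding nbhd_def by auto
  have "radon_term g j = radon_term g0 j" if "j \<in> J g0" for j
    using f_eq that dsw_eq_if_same_preimage[OF rr_Aut gA g0 ipow_Aut[OF t_Aut] w Aut_f_inv_f[OF g0]]
    unfolding radon_term_def by simp
  then show ?thesis using radon_eq_sum_J[OF g0 gA agree] radon_eq_sum_J[OF g0 g0] by simp
qed

lemma locally_constant_radon: "locally_constant (Gtop E) R"
  unfolding locally_constant_def Gtop_topspace
proof
  fix g0 assume g0: "g0 \<in> Aut E"
  then have "g0 \<in> nbhd g0" unfolding nbhd_def by simp
  then show "\<exists>U. openin (Gtop E) U \<and> g0 \<in> U \<and> (\<forall>g\<in>U. R g = R g0)"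
    using openin_nbhd radon_nbhd[OF g0] by blast
qed

definition radon_quot :: "('v \<Rightarrow> 'v) set \<Rightarrow> complex" where
  "radon_quot P = the_elem (R ` P)"

lemma radon_quot_lcoset: "radon_quot (lcoset g MT) = R g"
  unfolding radon_quot_def using Mgrp_subset_Mtau[OF id_Mgrp] radon_right_Mtau
  by (rule the_elem_image_lcoset)

definition coarsen :: "('v \<Rightarrow> 'v) set \<Rightarrow> ('v \<Rightarrow> 'v) set" where
  "coarsen P = the_elem ((\<lambda>g. lcoset g MT) ` P)"

lemma coarsen_lcoset: "coarsen (lcoset g M) = lcoset g MT"
  unfolding coarsen_def using id_Mgrp lcoset_right_Mtau[OF Mgrp_subset_Mtau]
  by (rule the_elem_image_lcoset)

lemma continuous_map_coarsen: "continuous_map XM XT coarsen"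
  by (rule continuous_map_from_qtop[OF continuous_map_qtop_proj]) (simp add: coarsen_lcoset)

lemma radon_quot_support_subset: "{P \<in> topspace XT. radon_quot P \<noteq> 0} \<subseteq> coarsen ` supp_f"
proof
  fix P assume P: "P \<in> {P \<in> topspace XT. radon_quot P \<noteq> 0}"
  then obtain g where g: "g \<in> Aut E" "P = lcoset g MT" unfolding topspace_XT by blast
  then have "R g \<noteq> 0" using P radon_quot_lcoset by simp
  have "\<exists>j. radon_term g j \<noteq> 0"
  proof (rule ccontr)
    assume "\<nexists>j. radon_term g j \<noteq> 0"
    then have "radon_term g = (\<lambda>_. 0)" by auto
    then show False using \<open>R g \<noteq> 0\<close> unfolding radon_eq_infsum by simp
  qed
  then obtain j where "radon_term g j \<noteq> 0" by blast
  then have "lcoset (g \<circ> ipow t j) M \<in> supp_f" by (rule radon_term_nonzero_imp_supp_f[OF g(1)])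
  moreover have "P = coarsen (lcoset (g \<circ> ipow t j) M)"
    unfolding coarsen_lcoset g(2) using lcoset_right_Mtau[OF Mtau_I[OF id_Mgrp]] by simp
  ultimately show "P \<in> coarsen ` supp_f" by (rule rev_image_eqI)
qed

lemma radon_quot_Cc_lc: "radon_quot \<in> Cc_lc XT"
proof -
  have lc: "locally_constant XT radon_quot"
    by (rule locally_constant_qtop) (simp add: radon_quot_lcoset locally_constant_radon)
  have closed: "closedin XT {P \<in> topspace XT. radon_quot P \<noteq> 0}"
    by (rule locally_constant_closedin_support[OF lc])
  have "compactin XT (coarsen ` supp_f)"
    by (rule image_compactin[OF compactin_supp_f continuous_map_coarsen])
  then have "compactin XT {P \<in> topspace XT. radon_quot P \<noteq> 0}"
    using radon_quot_support_subset closed by (rule closed_compactin)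
  then show ?thesis unfolding Cc_lc_iff closure_of_closedin[OF closed] using lc by simp
qed

end

theorem lemma3p4:
  fixes q :: nat and E :: "'v \<Rightarrow> 'v \<Rightarrow> bool" and v0 :: 'v
    and wm wp :: "(nat \<Rightarrow> 'v) set" and t rr :: "'v \<Rightarrow> 'v"
    and s s' :: complex and f :: "('v \<Rightarrow> 'v) set \<Rightarrow> complex"
  assumes q: "q \<ge> 2"
    and tree: "regular_tree q E"
    and ends: "wm \<in> ends E" "wp \<in> ends E" "wm \<noteq> wp"
    and o_geod: "on_geod wm wp v0"
    and t_aut: "t \<in> Aut E"
    and t_fix: "end_act t wm = wm" "end_act t wp = wp"
    and t_transl: "\<And>x. on_geod wm wp x \<Longrightarrow> (\<exists>r\<in>wp. r 0 = x \<and> t x = r 1)"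
    and rr_K: "rr \<in> Kgrp E v0"
    and rr_inv: "rr \<circ> rr = id"
    and rr_conj: "\<And>j. rr \<circ> ipow t j \<circ> inv rr = ipow t (- j)"
    and f: "f \<in> Cc_lc (qtop (Gtop E) (\<lambda>g. lcoset g (Mgrp E v0 wm wp)))"
  shows "(\<forall>g\<in>Aut E. finite {j. f (lcoset (g \<circ> ipow t j) (Mgrp E v0 wm wp)) *
                           dsw q E v0 wp t rr s (- cnj s') (g \<circ> ipow t j) \<noteq> 0}) \<and>
         (\<exists>F \<in> Cc_lc (qtop (Gtop E) (\<lambda>g. lcoset g (Mtau (Mgrp E v0 wm wp) t))).
            \<forall>g\<in>Aut E. F (lcoset g (Mtau (Mgrp E v0 wm wp) t)) = radon q E v0 wm wp t rr s s' f g)"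
proof -
  interpret tree E using regular_tree_imp_tree[OF tree] .
  interpret radon_setting E v0 wm wp t rr q s s' f
    by unfold_locales (fact ends(1,2) o_geod t_aut t_fix t_transl rr_K rr_inv rr_conj f)+
  have "\<forall>g\<in>Aut E. finite {j. radon_term g j \<noteq> 0}" using finite_radon_support by blast
  moreover have "\<exists>F\<in>Cc_lc XT. \<forall>g\<in>Aut E. F (lcoset g MT) = R g"
    using radon_quot_Cc_lc radon_quot_lcoset by blast
  ultimately show ?thesis unfolding radon_term_def by (rule conjI)
qed

end
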